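(* Let $\kappa$ be a cardinal and let $\{X_\alpha\}_{\alpha\in\mathbb I}$ be a $\kappa$-long directed family of topological spaces, with union $X=\bigcup_{\alpha}X_\alpha$. For an admissible topology $\mathscr S$ on $X$, the following are equivalent: (i) $t(X,\mathscr S)\leq\kappa$; (ii) $\mathscr S=\mathscr T$, where $\mathscr T$ is the colimit space topology, and $t(X_\alpha,\mathscr S)\leq\kappa$ for all $\alpha\in\mathbb I$.
   Context: A directed family of spaces $\{X_\alpha\}_{\alpha\in\mathbb I}$ here consists of spaces with $X_\alpha\subseteq X_\beta$ for $\alpha\leq\beta$, the bonding maps being the inclusions (continuous). It is $\kappa$-long if every subset $C\subseteq\mathbb I$ with $|C|\leq\kappa$ has an upper bound in $\mathbb I$. The colimit space topology on $X$ is $\mathscr T=\{U\subseteq X\mid U\cap X_\alpha\text{ open in }X_\alpha\ \forall\alpha\}$. A topology $\mathscr S$ on $X$ is admissible if every inclusion $X_\alpha\to(X,\mathscr S)$ is a topological embedding. The tightness $t(Y)$ of a space $Y$ is the least cardinal $\lambda$ such that whenever $p\in\operatorname{cl}A$ for $A\subseteq Y$, there is $C\subseteq A$ with $|C|\leq\lambda$ and $p\in\operatorname{cl}C$. $t(X_\alpha,\mathscr S)$ denotes the tightness of $X_\alpha$ with the subspace topology from $\mathscr S$. *)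

theory Defs
  imports "HOL-Analysis.Analysis"
begin

text \<open>Cardinal comparison: the cardinal kappa is represented as the cardinality of a set K.\<close>
definition card_le :: "'a set \<Rightarrow> 'k set \<Rightarrow> bool" where
  "card_le C K \<longleftrightarrow> (card_of C, card_of K) \<in> ordLeq"

definition tightness_le :: "'a topology \<Rightarrow> 'k set \<Rightarrow> bool" where
  "tightness_le Y K \<longleftrightarrow>
     (\<forall>A p. A \<subseteq> topspace Y \<and> p \<in> Y closure_of A \<longrightarrow>
        (\<exists>C. C \<subseteq> A \<and> card_le C K \<and> p \<in> Y closure_of C))"

definition directed_family ::
  "'i set \<Rightarrow> ('i \<Rightarrow> 'i \<Rightarrow> bool) \<Rightarrow> ('i \<Rightarrow> 'a topology) \<Rightarrow> bool" where
  "directed_family I le X \<longleftrightarrow>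
     (\<forall>a\<in>I. le a a) \<and>
     (\<forall>a\<in>I. \<forall>b\<in>I. \<forall>c\<in>I. le a b \<and> le b c \<longrightarrow> le a c) \<and>
     (\<forall>a\<in>I. \<forall>b\<in>I. \<exists>c\<in>I. le a c \<and> le b c) \<and>
     (\<forall>a\<in>I. \<forall>b\<in>I. le a b \<longrightarrow>
        topspace (X a) \<subseteq> topspace (X b) \<and> continuous_map (X a) (X b) id)"

definition kappa_long ::
  "'k set \<Rightarrow> 'i set \<Rightarrow> ('i \<Rightarrow> 'i \<Rightarrow> bool) \<Rightarrow> bool" where
  "kappa_long K I le \<longleftrightarrow>
     (\<forall>C. C \<subseteq> I \<and> card_le C K \<longrightarrow> (\<exists>b\<in>I. \<forall>c\<in>C. le c b))"

definition union_space :: "'i set \<Rightarrow> ('i \<Rightarrow> 'a topology) \<Rightarrow> 'a set" where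
  "union_space I X = (\<Union>a\<in>I. topspace (X a))"

definition colimit_topology :: "'i set \<Rightarrow> ('i \<Rightarrow> 'a topology) \<Rightarrow> 'a topology" where
  "colimit_topology I X = topology (\<lambda>U. U \<subseteq> union_space I X \<and>
     (\<forall>a\<in>I. openin (X a) (U \<inter> topspace (X a))))"

definition admissible :: "'i set \<Rightarrow> ('i \<Rightarrow> 'a topology) \<Rightarrow> 'a topology \<Rightarrow> bool" where
  "admissible I X S \<longleftrightarrow> topspace S = union_space I X \<and>
     (\<forall>a\<in>I. embedding_map (X a) S id)"

end

theory Submission
  imports Defs
begin

text \<open>Write \<open>[A]\<^sub>\<kappa>\<close> for the union of the closures of the \<open>\<kappa>\<close>-small subsets of \<open>A\<close>, so that
  tightness \<open>\<le> \<kappa>\<close> means \<open>cl A \<subseteq> [A]\<^sub>\<kappa>\<close>, and note that \<open>[[A]\<^sub>\<kappa>]\<^sub>\<kappa> \<subseteq> [A]\<^sub>\<kappa>\<close>. If every \<open>X\<^sub>\<alpha>\<close>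
  has tightness \<open>\<le> \<kappa>\<close>, the trace of the colimit-closure \<open>[A]\<^sub>\<kappa>\<close> on \<open>X\<^sub>\<alpha>\<close> contains its own
  \<open>\<kappa>\<close>-closure in \<open>X\<^sub>\<alpha>\<close>, hence is closed there; so \<open>[A]\<^sub>\<kappa>\<close> is closed in the colimit topology
  and contains \<open>cl A\<close>. This gives (ii) \<open>\<Longrightarrow>\<close> (i), for any family. Conversely, tightness is
  hereditary and an admissible topology is coarser than the colimit topology. If \<open>S\<close> has
  tightness \<open>\<le> \<kappa>\<close> and \<open>F\<close> is closed in the colimit topology, an \<open>S\<close>-limit point \<open>p\<close> of \<open>F\<close> is
  a limit point of a \<open>\<kappa>\<close>-small \<open>C \<subseteq> F\<close>; since the family is \<open>\<kappa>\<close>-long and directed, \<open>C\<close> and \<open>p\<close>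
  lie in a single \<open>X\<^sub>\<alpha>\<close>, in which \<open>F\<close> is closed, so \<open>p \<in> F\<close>.\<close>

definition kappa_closure :: "'a topology \<Rightarrow> 'k set \<Rightarrow> 'a set \<Rightarrow> 'a set" where
  "kappa_closure Y K A = (\<Union>C \<in> {C. C \<subseteq> A \<and> card_le C K}. Y closure_of C)"

lemma tightness_le_iff_closure_of_subset_kappa_closure:
  "tightness_le Y K \<longleftrightarrow> (\<forall>A. A \<subseteq> topspace Y \<longrightarrow> Y closure_of A \<subseteq> kappa_closure Y K A)"
  unfolding tightness_le_def kappa_closure_def by blast

lemma kappa_closure_subset_topspace: "kappa_closure Y K A \<subseteq> topspace Y"
  unfolding kappa_closure_def using closure_of_subset_topspace by fast

lemma kappa_closure_mono: "A \<subseteq> B \<Longrightarrow> kappa_closure Y K A \<subseteq> kappa_closure Y K B"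
  unfolding kappa_closure_def by blast

lemma kappa_closure_continuous_id_subset:
  assumes "continuous_map Y Z id"
  shows "kappa_closure Y K A \<subseteq> kappa_closure Z K A"
proof -
  have "Y closure_of C \<subseteq> Z closure_of C" for C
    using continuous_map_image_closure_subset[OF assms, of C] by simp
  then show ?thesis
    unfolding kappa_closure_def by blast
qed

text \<open>\<open>{x}\<close> itself need not be \<open>\<kappa>\<close>-small, since \<open>K\<close> may be empty.\<close>
lemma subset_kappa_closure:
  assumes "tightness_le Y K" and "A \<subseteq> topspace Y"
  shows "A \<subseteq> kappa_closure Y K A"
proof
  fix x assume "x \<in> A"
  then have "{x} \<subseteq> topspace Y" and "x \<in> Y closure_of {x}"
    using assms(2) by (auto intro: closure_of_subset[THEN subsetD])
  then have "x \<in> kappa_closure Y K {x}"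
    using assms(1) by (auto simp: tightness_le_iff_closure_of_subset_kappa_closure)
  with \<open>x \<in> A\<close> show "x \<in> kappa_closure Y K A"
    using kappa_closure_mono[of "{x}" A] by blast
qed

lemma kappa_closure_kappa_closure_subset:
  "kappa_closure Y K (kappa_closure Y K A) \<subseteq> kappa_closure Y K A"
proof
  fix q assume "q \<in> kappa_closure Y K (kappa_closure Y K A)"
  then obtain D where D: "D \<subseteq> kappa_closure Y K A" "card_le D K" "q \<in> Y closure_of D"
    unfolding kappa_closure_def by blast
  then have "\<forall>d\<in>D. \<exists>C. C \<subseteq> A \<and> card_le C K \<and> d \<in> Y closure_of C"
    unfolding kappa_closure_def by blast
  then obtain h where h: "\<And>d. d \<in> D \<Longrightarrow> h d \<subseteq> A \<and> card_le (h d) K \<and> d \<in> Y closure_of h d"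
    by metis
  show "q \<in> kappa_closure Y K A"
  proof (cases "finite K")
    case True
    \<comment> \<open>The union of the \<open>h d\<close> may be too big, but \<open>D\<close> is finite and the closure of a finite
      set is the union of the closures of its points.\<close>
    then have "finite D"
      using D(2) card_of_ordLeq_finite unfolding card_le_def by blast
    then obtain d where d: "d \<in> D" "q \<in> Y closure_of {d}"
      using D(3) closure_of_Union[of "(\<lambda>d. {d}) ` D" Y] by auto
    have "Y closure_of {d} \<subseteq> Y closure_of h d"
      using h[OF d(1)] by (intro closure_of_minimal) auto
    with d h show ?thesis
      unfolding kappa_closure_def by blast
  next
    case False
    define C where "C = (\<Union>d\<in>D. h d)"
    have "card_le C K"
      using card_of_UNION_ordLeq_infinite[OF False] D(2) h unfolding C_def card_le_def by blast
    moreover have "C \<subseteq> A"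
      using h unfolding C_def by blast
    moreover have "D \<subseteq> Y closure_of C"
    proof
      fix d assume "d \<in> D"
      then have "h d \<subseteq> C"
        unfolding C_def by blast
      with h[OF \<open>d \<in> D\<close>] show "d \<in> Y closure_of C"
        using closure_of_mono by blast
    qed
    then have "Y closure_of D \<subseteq> Y closure_of C"
      by (intro closure_of_minimal) auto
    ultimately show ?thesis
      using D(3) unfolding kappa_closure_def by blast
  qed
qed

lemma tightness_le_subtopology:
  assumes "tightness_le Y K"
  shows "tightness_le (subtopology Y T) K"
  unfolding tightness_le_def
proof (intro allI impI)
  fix A p
  assume "A \<subseteq> topspace (subtopology Y T) \<and> p \<in> subtopology Y T closure_of A"
  then have A: "A \<subseteq> T" "A \<subseteq> topspace Y" and p: "p \<in> T" "p \<in> Y closure_of A"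
    by (auto simp: closure_of_subtopology Int_absorb1)
  then obtain C where C: "C \<subseteq> A" "card_le C K" "p \<in> Y closure_of C"
    using assms unfolding tightness_le_def by blast
  then have "p \<in> subtopology Y T closure_of C"
    using A p by (simp add: closure_of_subtopology Int_absorb1[of C])
  with C show "\<exists>C\<subseteq>A. card_le C K \<and> p \<in> subtopology Y T closure_of C"
    by blast
qed

lemma istopology_colimit:
  "istopology (\<lambda>U. U \<subseteq> union_space I X \<and> (\<forall>a\<in>I. openin (X a) (U \<inter> topspace (X a))))"
  unfolding istopology_def
proof (rule conjI; intro allI impI)
  fix U V
  assume "U \<subseteq> union_space I X \<and> (\<forall>a\<in>I. openin (X a) (U \<inter> topspace (X a)))"
    and "V \<subseteq> union_space I X \<and> (\<forall>a\<in>I. openin (X a) (V \<inter> topspace (X a)))"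
  moreover have "U \<inter> V \<inter> topspace (X a) = (U \<inter> topspace (X a)) \<inter> (V \<inter> topspace (X a))" for a
    by blast
  ultimately show "U \<inter> V \<subseteq> union_space I X \<and> (\<forall>a\<in>I. openin (X a) (U \<inter> V \<inter> topspace (X a)))"
    by auto
next
  fix \<U>
  assume \<U>: "\<forall>U\<in>\<U>. U \<subseteq> union_space I X \<and> (\<forall>a\<in>I. openin (X a) (U \<inter> topspace (X a)))"
  have "openin (X a) (\<Union>\<U> \<inter> topspace (X a))" if "a \<in> I" for a
  proof -
    have "openin (X a) (\<Union>U\<in>\<U>. U \<inter> topspace (X a))"
      using \<U> that by (intro openin_Union) auto
    also have "(\<Union>U\<in>\<U>. U \<inter> topspace (X a)) = \<Union>\<U> \<inter> topspace (X a)"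
      by blast
    finally show ?thesis .
  qed
  with \<U> show "\<Union>\<U> \<subseteq> union_space I X \<and> (\<forall>a\<in>I. openin (X a) (\<Union>\<U> \<inter> topspace (X a)))"
    by blast
qed

lemma openin_colimit_topology:
  "openin (colimit_topology I X) U \<longleftrightarrow>
    U \<subseteq> union_space I X \<and> (\<forall>a\<in>I. openin (X a) (U \<inter> topspace (X a)))"
  unfolding colimit_topology_def topology_inverse'[OF istopology_colimit] ..

lemma topspace_colimit_topology: "topspace (colimit_topology I X) = union_space I X"
proof -
  have "\<forall>a\<in>I. union_space I X \<inter> topspace (X a) = topspace (X a)"
    unfolding union_space_def by blast
  then have "openin (colimit_topology I X) (union_space I X)"
    by (simp add: openin_colimit_topology)
  then show ?thesis
    using openin_subset openin_colimit_topology
    by (metis openin_topspace subset_antisym)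
qed

lemma closedin_colimit_topology:
  "closedin (colimit_topology I X) F \<longleftrightarrow>
    F \<subseteq> union_space I X \<and> (\<forall>a\<in>I. closedin (X a) (F \<inter> topspace (X a)))"
proof -
  have "(union_space I X - F) \<inter> topspace (X a) = topspace (X a) - F \<inter> topspace (X a)"
    if "a \<in> I" for a
    using that unfolding union_space_def by blast
  then show ?thesis
    by (auto simp: closedin_def openin_colimit_topology topspace_colimit_topology)
qed

lemma continuous_map_id_colimit_topology:
  assumes "a \<in> I"
  shows "continuous_map (X a) (colimit_topology I X) id"
proof -
  have "topspace (X a) \<subseteq> union_space I X"
    using assms unfolding union_space_def by blast
  moreover have "{x \<in> topspace (X a). x \<in> U} = U \<inter> topspace (X a)" for U
    by blast
  ultimately show ?thesis
    using assms by (auto simp: continuous_map_def openin_colimit_topology topspace_colimit_topology)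
qed

lemma tightness_le_colimit_topology:
  assumes "\<forall>a\<in>I. tightness_le (X a) K"
  shows "tightness_le (colimit_topology I X) K"
  unfolding tightness_le_iff_closure_of_subset_kappa_closure
proof (intro allI impI)
  let ?T = "colimit_topology I X"
  fix A assume A: "A \<subseteq> topspace ?T"
  define B where "B = kappa_closure ?T K A"
  have trace_closed: "closedin (X a) (B \<inter> topspace (X a))" if a: "a \<in> I" for a
  proof -
    have "X a closure_of (B \<inter> topspace (X a)) \<subseteq> kappa_closure (X a) K (B \<inter> topspace (X a))"
      using assms a by (simp add: tightness_le_iff_closure_of_subset_kappa_closure)
    also have "\<dots> \<subseteq> kappa_closure ?T K (B \<inter> topspace (X a))"
      by (rule kappa_closure_continuous_id_subset[OF continuous_map_id_colimit_topology[OF a]])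
    also have "\<dots> \<subseteq> B"
      unfolding B_def by (meson Int_lower1 kappa_closure_kappa_closure_subset kappa_closure_mono order_trans)
    finally show ?thesis
      using closure_of_subset_eq closure_of_subset_topspace by fastforce
  qed
  have "A \<subseteq> B"
  proof
    fix x assume "x \<in> A"
    then obtain a where a: "a \<in> I" "x \<in> topspace (X a)"
      using A unfolding topspace_colimit_topology union_space_def by blast
    have "A \<inter> topspace (X a) \<subseteq> kappa_closure (X a) K (A \<inter> topspace (X a))"
      using assms a by (intro subset_kappa_closure) auto
    also have "\<dots> \<subseteq> kappa_closure ?T K (A \<inter> topspace (X a))"
      by (rule kappa_closure_continuous_id_subset[OF continuous_map_id_colimit_topology[OF a(1)]])
    also have "\<dots> \<subseteq> B"
      unfolding B_def by (rule kappa_closure_mono) blast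
    finally show "x \<in> B"
      using \<open>x \<in> A\<close> a by blast
  qed
  moreover have "closedin ?T B"
    using trace_closed kappa_closure_subset_topspace[of ?T K A]
    unfolding B_def closedin_colimit_topology topspace_colimit_topology by blast
  ultimately show "?T closure_of A \<subseteq> kappa_closure ?T K A"
    unfolding B_def by (rule closure_of_minimal)
qed

lemma admissible_subtopology_eq:
  assumes "admissible I X S" and "a \<in> I"
  shows "X a = subtopology S (topspace (X a))"
  using assms unfolding admissible_def embedding_map_def by auto

lemma closure_of_admissible:
  assumes "admissible I X S" and "a \<in> I"
  shows "X a closure_of C = topspace (X a) \<inter> S closure_of (topspace (X a) \<inter> C)"
proof -
  have "X a closure_of C = subtopology S (topspace (X a)) closure_of C"
    using admissible_subtopology_eq[OF assms] by (rule arg_cong)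
  then show ?thesis
    by (simp add: closure_of_subtopology)
qed

lemma openin_colimit_topology_if_admissible:
  assumes "admissible I X S" and "openin S U"
  shows "openin (colimit_topology I X) U"
proof -
  have "openin (X a) (U \<inter> topspace (X a))" if "a \<in> I" for a
    using assms admissible_subtopology_eq[OF assms(1) that] by (metis openin_subtopology_Int)
  moreover have "U \<subseteq> union_space I X"
    using assms openin_subset unfolding admissible_def by blast
  ultimately show ?thesis
    by (simp add: openin_colimit_topology)
qed

lemma directed_family_topspace_mono:
  assumes "directed_family I le X" and "a \<in> I" "b \<in> I" "le a b"
  shows "topspace (X a) \<subseteq> topspace (X b)"
  using assms unfolding directed_family_def by blast

lemma directed_family_common_upper_topspace:
  assumes "directed_family I le X" and "a \<in> I" "b \<in> I"
  obtains c where "c \<in> I" "topspace (X a) \<subseteq> topspace (X c)" "topspace (X b) \<subseteq> topspace (X c)"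
proof -
  obtain c where c: "c \<in> I" "le a c" "le b c"
    using assms unfolding directed_family_def by meson
  show thesis
    using that[OF c(1)] directed_family_topspace_mono[OF assms(1)] assms(2,3) c by blast
qed

lemma kappa_long_small_subset_topspace:
  assumes "directed_family I le X" and "kappa_long K I le"
    and "C \<subseteq> union_space I X" and "card_le C K"
  obtains b where "b \<in> I" "C \<subseteq> topspace (X b)"
proof -
  have "\<forall>c\<in>C. \<exists>a\<in>I. c \<in> topspace (X a)"
    using assms(3) unfolding union_space_def by blast
  then obtain f where f: "\<And>c. c \<in> C \<Longrightarrow> f c \<in> I \<and> c \<in> topspace (X (f c))"
    by metis
  have "card_le (f ` C) K"
    using assms(4) card_of_image[of f C] ordLeq_transitive unfolding card_le_def by blast
  moreover have "f ` C \<subseteq> I"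
    using f by blast
  ultimately obtain b where b: "b \<in> I" "\<forall>i\<in>f ` C. le i b"
    using assms(2) unfolding kappa_long_def by meson
  have "C \<subseteq> topspace (X b)"
    using directed_family_topspace_mono[OF assms(1)] f b by blast
  with b(1) show thesis
    using that by blast
qed

lemma admissible_eq_colimit_topology_if_tightness_le:
  assumes "directed_family I le X" and "kappa_long K I le" and "admissible I X S"
    and "tightness_le S K"
  shows "S = colimit_topology I X"
proof -
  let ?T = "colimit_topology I X"
  have topspace_S: "topspace S = topspace ?T"
    using assms(3) unfolding admissible_def topspace_colimit_topology by blast
  have closedin_S: "closedin S F" if F: "closedin ?T F" for F
  proof -
    have F_sub: "F \<subseteq> union_space I X" and F_traces: "\<forall>a\<in>I. closedin (X a) (F \<inter> topspace (X a))"
      using F unfolding closedin_colimit_topology by blast+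
    have "kappa_closure S K F \<subseteq> F"
    proof
      fix p assume "p \<in> kappa_closure S K F"
      then obtain C where C: "C \<subseteq> F" "card_le C K" "p \<in> S closure_of C"
        unfolding kappa_closure_def by blast
      obtain b where b: "b \<in> I" "C \<subseteq> topspace (X b)"
        using C(1) F_sub by (rule kappa_long_small_subset_topspace[OF assms(1,2) subset_trans C(2)])
      have "p \<in> topspace S"
        using C(3) closure_of_subset_topspace by fast
      then obtain a where a: "a \<in> I" "p \<in> topspace (X a)"
        unfolding topspace_S topspace_colimit_topology union_space_def by blast
      obtain g where g: "g \<in> I" "topspace (X a) \<subseteq> topspace (X g)" "topspace (X b) \<subseteq> topspace (X g)"
        by (rule directed_family_common_upper_topspace[OF assms(1) a(1) b(1)])
      have "p \<in> X g closure_of C"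
        using closure_of_admissible[OF assms(3) g(1)] a(2) b(2) g(2,3) C(3)
        by (simp add: Int_absorb1 subset_trans subsetD)
      also have "X g closure_of C \<subseteq> F \<inter> topspace (X g)"
        using F_traces g(1,3) b(2) C(1) by (intro closure_of_minimal) auto
      finally show "p \<in> F"
        by blast
    qed
    moreover have "S closure_of F \<subseteq> kappa_closure S K F"
      using assms(4) F_sub topspace_S
      unfolding tightness_le_iff_closure_of_subset_kappa_closure topspace_colimit_topology
      by blast
    ultimately show ?thesis
      using F_sub topspace_S closure_of_subset_eq[of F S]
      unfolding topspace_colimit_topology by blast
  qed
  have "openin S U \<longleftrightarrow> openin ?T U" for U
  proof
    assume U: "openin ?T U"
    then have "closedin S (topspace S - U)"
      using closedin_S topspace_S by auto
    moreover have "U \<subseteq> topspace S"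
      using openin_subset[OF U] topspace_S by simp
    ultimately show "openin S U"
      by (simp add: openin_closedin_eq)
  qed (rule openin_colimit_topology_if_admissible[OF assms(3)])
  then show ?thesis
    by (simp add: topology_eq)
qed

theorem proposition2p3:
  fixes K :: "'k set" and I :: "'i set" and le :: "'i \<Rightarrow> 'i \<Rightarrow> bool"
    and X :: "'i \<Rightarrow> 'a topology" and S :: "'a topology"
  assumes "directed_family I le X"
    and "kappa_long K I le"
    and "admissible I X S"
  shows "tightness_le S K \<longleftrightarrow>
           (S = colimit_topology I X \<and>
            (\<forall>a\<in>I. tightness_le (subtopology S (topspace (X a))) K))"
proof
  assume "tightness_le S K"
  then show "S = colimit_topology I X \<and> (\<forall>a\<in>I. tightness_le (subtopology S (topspace (X a))) K)"
    using admissible_eq_colimit_topology_if_tightness_le[OF assms] tightness_le_subtopology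
    by blast
next
  assume "S = colimit_topology I X \<and> (\<forall>a\<in>I. tightness_le (subtopology S (topspace (X a))) K)"
  then show "tightness_le S K"
    using tightness_le_colimit_topology admissible_subtopology_eq[OF assms(3)] by metis
qed

end
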